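(* Not all FO-definable transformations are SRT-definable: there exist a linear group $\mathbf{G}$, finite label sets $\Sigma,\Gamma$ and an sMSO $\mathcal{M}=(\Sigma,\Gamma,\mathbf{G},\phi)$ with $\phi$ a first-order sentence such that $[\![\mathcal{M}]\!]\neq[\![\mathcal{S}]\!]$ for every $(\Sigma,\Gamma,\mathbf{G})$-SRT $\mathcal{S}$.
   Context: A linear group is a triple $\mathbf{G}=(D,\leq,+)$ where $D$ is an infinite set, $\leq$ is a total order on $D$, and $(D,+)$ is a group with identity $0$. For finite label sets $\Sigma,\Gamma$, a $(\Sigma,\Gamma,\mathbf{G})$-SRT is a tuple $\mathcal{S}=(Q,q_0,k,R_0,\Delta)$: $Q$ finite set of states, $q_0\in Q$, $k\in\mathbb{N}$ registers, initial values $R_0\in D^k$, transitions $\Delta\subseteq Q\times\Sigma\times\{>,=,<\}^k\times\{\mathsf{old},\mathsf{new},\mathsf{add}\}^k\times\{1,\dots,k\}\times\Gamma\times Q$. A transition $(q,\sigma,l,m,u,\gamma,q')$ enables the step $(q,R)\xrightarrow[(\gamma,d')]{(\sigma,d)}(q',R')$ iff (1) for every $i$, $d>R[i]$, $d=R[i]$ or $d<R[i]$ according as $l[i]$ is $>$, $=$, $<$; (2) $R'[i]=R[i]$, $d$, or $R[i]+d$ according as $m[i]$ is $\mathsf{old}$, $\mathsf{new}$, $\mathsf{add}$; (3) $d'=R'[u]$. A run over $s\in(\Sigma\times D)^*$ of length $n$ generating $t\in(\Gamma\times D)^*$ is a sequence of $n$ enabled steps from $(q_0,R_0)$ reading $s[i]$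 and emitting $t[i]$. $s\otimes t$ is the word with $i$-th letter $(s[i],t[i])$; $[\![\mathcal{S}]\!]=\{s\otimes t:\text{there is a run over }s\text{ generating }t\}$. The logic $\mathsf{MSO}(\Sigma,\Gamma,\mathbf{G})$ is interpreted over finite words $V$ over $(\Sigma\times D)\times(\Gamma\times D)$. It has first-order position variables and second-order variables over sets of positions; atomic formulae $x=y$, $x\in X$, $L_\sigma(x)$ (input label at $x$ is $\sigma$), $L_\gamma(x)$ (output label at $x$ is $\gamma$), $S(x,y)$ ($y=x+1$), and $E\leq 0$ where $E$ is built with $+,-$ from $dt_{in}(x)$, $dt_{out}(x)$ (input/output data value at $x$), $sum\_dt_{in}(X)$, $sum\_dt_{out}(X)$ (sums of input/output data values over $X$) and $0$; closed under boolean connectives and first/second-order quantifiers. A first-order formula is one with no set variables. An sMSO is $\mathcal{M}=(\Sigma,\Gamma,\mathbf{G},\phi)$ with $\phi$ a sentence of this logic, and $[\![\mathcal{M}]\!]=\{V: V[0..i]\models\phi\text{ for every }i\}$, $V[0..i]$ denoting the prefix on positions $0,\dots,i$. A transformation is FO-definable if it equals $[\![\mathcal{M}]\!]$ for an sMSO whose sentence is first-order. *)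

theory Defs
  imports Complex_Main
begin

text \<open>A linear group (D, le, +) with identity 0; the inverse map is recorded explicitly
  (it is uniquely determined by the group structure).\<close>

record 'd lgroup =
  lg_D    :: "'d set"
  lg_le   :: "'d \<Rightarrow> 'd \<Rightarrow> bool"
  lg_add  :: "'d \<Rightarrow> 'd \<Rightarrow> 'd"
  lg_zero :: 'd
  lg_neg  :: "'d \<Rightarrow> 'd"

definition linear_group :: "('d, 'z) lgroup_scheme \<Rightarrow> bool" where
  "linear_group G \<longleftrightarrow>
     infinite (lg_D G)
   \<and> (\<forall>x\<in>lg_D G. lg_le G x x)
   \<and> (\<forall>x\<in>lg_D G. \<forall>y\<in>lg_D G. lg_le G x y \<and> lg_le G y x \<longrightarrow> x = y)
   \<and> (\<forall>x\<in>lg_D G. \<forall>y\<in>lg_D G. \<forall>z\<in>lg_D G. lg_le G x y \<and> lg_le G y z \<longrightarrow> lg_le G x z)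
   \<and> (\<forall>x\<in>lg_D G. \<forall>y\<in>lg_D G. lg_le G x y \<or> lg_le G y x)
   \<and> (\<forall>x\<in>lg_D G. \<forall>y\<in>lg_D G. lg_add G x y \<in> lg_D G)
   \<and> lg_zero G \<in> lg_D G
   \<and> (\<forall>x\<in>lg_D G. lg_neg G x \<in> lg_D G)
   \<and> (\<forall>x\<in>lg_D G. \<forall>y\<in>lg_D G. \<forall>z\<in>lg_D G.
        lg_add G (lg_add G x y) z = lg_add G x (lg_add G y z))
   \<and> (\<forall>x\<in>lg_D G. lg_add G (lg_zero G) x = x \<and> lg_add G x (lg_zero G) = x)
   \<and> (\<forall>x\<in>lg_D G. lg_add G (lg_neg G x) x = lg_zero G \<and> lg_add G x (lg_neg G x) = lg_zero G)"

definition lg_less :: "('d, 'z) lgroup_scheme \<Rightarrow> 'd \<Rightarrow> 'd \<Rightarrow> bool" where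
  "lg_less G x y \<longleftrightarrow> lg_le G x y \<and> x \<noteq> y"

definition lg_sum :: "('d, 'z) lgroup_scheme \<Rightarrow> 'd list \<Rightarrow> 'd" where
  "lg_sum G xs = foldr (lg_add G) xs (lg_zero G)"

type_synonym ('s, 'g, 'd) dword = "(('s \<times> 'd) \<times> ('g \<times> 'd)) list"

definition dwords :: "('d, 'z) lgroup_scheme \<Rightarrow> 's set \<Rightarrow> 'g set \<Rightarrow> ('s, 'g, 'd) dword set" where
  "dwords G Sig Gam = lists ((Sig \<times> lg_D G) \<times> (Gam \<times> lg_D G))"

text \<open>First-order (position) variables and second-order (set) variables are both
  named by natural numbers, in separate name spaces.\<close>

datatype expr =
    DtIn nat | DtOut nat | SumDtIn nat | SumDtOut nat
  | EZero | EPlus expr expr | EMinus expr expr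

datatype ('s, 'g) mso =
    MEq nat nat
  | MMem nat nat
  | MLin 's nat
  | MLout 'g nat
  | MSucc nat nat
  | MLe0 expr
  | MNot "('s, 'g) mso"
  | MAnd "('s, 'g) mso" "('s, 'g) mso"
  | MOr "('s, 'g) mso" "('s, 'g) mso"
  | MEx1 nat "('s, 'g) mso"
  | MAll1 nat "('s, 'g) mso"
  | MEx2 nat "('s, 'g) mso"
  | MAll2 nat "('s, 'g) mso"

primrec eval_expr :: "('d, 'z) lgroup_scheme \<Rightarrow> ('s, 'g, 'd) dword \<Rightarrow> (nat \<Rightarrow> nat)
    \<Rightarrow> (nat \<Rightarrow> nat set) \<Rightarrow> expr \<Rightarrow> 'd" where
  "eval_expr G V a1 a2 (DtIn x) = snd (fst (V ! a1 x))"
| "eval_expr G V a1 a2 (DtOut x) = snd (snd (V ! a1 x))"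
| "eval_expr G V a1 a2 (SumDtIn X) =
     lg_sum G (map (\<lambda>i. snd (fst (V ! i))) (sorted_list_of_set (a2 X)))"
| "eval_expr G V a1 a2 (SumDtOut X) =
     lg_sum G (map (\<lambda>i. snd (snd (V ! i))) (sorted_list_of_set (a2 X)))"
| "eval_expr G V a1 a2 EZero = lg_zero G"
| "eval_expr G V a1 a2 (EPlus e1 e2) = lg_add G (eval_expr G V a1 a2 e1) (eval_expr G V a1 a2 e2)"
| "eval_expr G V a1 a2 (EMinus e1 e2) =
     lg_add G (eval_expr G V a1 a2 e1) (lg_neg G (eval_expr G V a1 a2 e2))"

primrec sat :: "('d, 'z) lgroup_scheme \<Rightarrow> ('s, 'g, 'd) dword \<Rightarrow> (nat \<Rightarrow> nat)
    \<Rightarrow> (nat \<Rightarrow> nat set) \<Rightarrow> ('s, 'g) mso \<Rightarrow> bool" where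
  "sat G V a1 a2 (MEq x y) = (a1 x = a1 y)"
| "sat G V a1 a2 (MMem x X) = (a1 x \<in> a2 X)"
| "sat G V a1 a2 (MLin s x) = (fst (fst (V ! a1 x)) = s)"
| "sat G V a1 a2 (MLout g x) = (fst (snd (V ! a1 x)) = g)"
| "sat G V a1 a2 (MSucc x y) = (a1 y = Suc (a1 x))"
| "sat G V a1 a2 (MLe0 e) = lg_le G (eval_expr G V a1 a2 e) (lg_zero G)"
| "sat G V a1 a2 (MNot f) = (\<not> sat G V a1 a2 f)"
| "sat G V a1 a2 (MAnd f g) = (sat G V a1 a2 f \<and> sat G V a1 a2 g)"
| "sat G V a1 a2 (MOr f g) = (sat G V a1 a2 f \<or> sat G V a1 a2 g)"
| "sat G V a1 a2 (MEx1 x f) = (\<exists>i<length V. sat G V (a1(x := i)) a2 f)"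
| "sat G V a1 a2 (MAll1 x f) = (\<forall>i<length V. sat G V (a1(x := i)) a2 f)"
| "sat G V a1 a2 (MEx2 X f) = (\<exists>P \<subseteq> {..<length V}. sat G V a1 (a2(X := P)) f)"
| "sat G V a1 a2 (MAll2 X f) = (\<forall>P \<subseteq> {..<length V}. sat G V a1 (a2(X := P)) f)"

primrec fv1_expr :: "expr \<Rightarrow> nat set" where
  "fv1_expr (DtIn x) = {x}" | "fv1_expr (DtOut x) = {x}"
| "fv1_expr (SumDtIn X) = {}" | "fv1_expr (SumDtOut X) = {}" | "fv1_expr EZero = {}"
| "fv1_expr (EPlus a b) = fv1_expr a \<union> fv1_expr b"
| "fv1_expr (EMinus a b) = fv1_expr a \<union> fv1_expr b"

primrec fv2_expr :: "expr \<Rightarrow> nat set" where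
  "fv2_expr (DtIn x) = {}" | "fv2_expr (DtOut x) = {}"
| "fv2_expr (SumDtIn X) = {X}" | "fv2_expr (SumDtOut X) = {X}" | "fv2_expr EZero = {}"
| "fv2_expr (EPlus a b) = fv2_expr a \<union> fv2_expr b"
| "fv2_expr (EMinus a b) = fv2_expr a \<union> fv2_expr b"

primrec fv1 :: "('s, 'g) mso \<Rightarrow> nat set" where
  "fv1 (MEq x y) = {x, y}" | "fv1 (MMem x X) = {x}" | "fv1 (MLin s x) = {x}"
| "fv1 (MLout g x) = {x}" | "fv1 (MSucc x y) = {x, y}" | "fv1 (MLe0 e) = fv1_expr e"
| "fv1 (MNot f) = fv1 f" | "fv1 (MAnd f g) = fv1 f \<union> fv1 g" | "fv1 (MOr f g) = fv1 f \<union> fv1 g"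
| "fv1 (MEx1 x f) = fv1 f - {x}" | "fv1 (MAll1 x f) = fv1 f - {x}"
| "fv1 (MEx2 X f) = fv1 f" | "fv1 (MAll2 X f) = fv1 f"

primrec fv2 :: "('s, 'g) mso \<Rightarrow> nat set" where
  "fv2 (MEq x y) = {}" | "fv2 (MMem x X) = {X}" | "fv2 (MLin s x) = {}"
| "fv2 (MLout g x) = {}" | "fv2 (MSucc x y) = {}" | "fv2 (MLe0 e) = fv2_expr e"
| "fv2 (MNot f) = fv2 f" | "fv2 (MAnd f g) = fv2 f \<union> fv2 g" | "fv2 (MOr f g) = fv2 f \<union> fv2 g"
| "fv2 (MEx1 x f) = fv2 f" | "fv2 (MAll1 x f) = fv2 f"
| "fv2 (MEx2 X f) = fv2 f - {X}" | "fv2 (MAll2 X f) = fv2 f - {X}"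

definition sentence :: "('s, 'g) mso \<Rightarrow> bool" where
  "sentence f \<longleftrightarrow> fv1 f = {} \<and> fv2 f = {}"

primrec fo_expr :: "expr \<Rightarrow> bool" where
  "fo_expr (DtIn x) = True" | "fo_expr (DtOut x) = True"
| "fo_expr (SumDtIn X) = False" | "fo_expr (SumDtOut X) = False" | "fo_expr EZero = True"
| "fo_expr (EPlus a b) = (fo_expr a \<and> fo_expr b)"
| "fo_expr (EMinus a b) = (fo_expr a \<and> fo_expr b)"

primrec first_order :: "('s, 'g) mso \<Rightarrow> bool" where
  "first_order (MEq x y) = True" | "first_order (MMem x X) = False"
| "first_order (MLin s x) = True" | "first_order (MLout g x) = True"
| "first_order (MSucc x y) = True" | "first_order (MLe0 e) = fo_expr e"
| "first_order (MNot f) = first_order f"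
| "first_order (MAnd f g) = (first_order f \<and> first_order g)"
| "first_order (MOr f g) = (first_order f \<and> first_order g)"
| "first_order (MEx1 x f) = first_order f" | "first_order (MAll1 x f) = first_order f"
| "first_order (MEx2 X f) = False" | "first_order (MAll2 X f) = False"

primrec mso_over :: "'s set \<Rightarrow> 'g set \<Rightarrow> ('s, 'g) mso \<Rightarrow> bool" where
  "mso_over Sig Gam (MEq x y) = True" | "mso_over Sig Gam (MMem x X) = True"
| "mso_over Sig Gam (MLin s x) = (s \<in> Sig)" | "mso_over Sig Gam (MLout g x) = (g \<in> Gam)"
| "mso_over Sig Gam (MSucc x y) = True" | "mso_over Sig Gam (MLe0 e) = True"
| "mso_over Sig Gam (MNot f) = mso_over Sig Gam f"
| "mso_over Sig Gam (MAnd f g) = (mso_over Sig Gam f \<and> mso_over Sig Gam g)"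
| "mso_over Sig Gam (MOr f g) = (mso_over Sig Gam f \<and> mso_over Sig Gam g)"
| "mso_over Sig Gam (MEx1 x f) = mso_over Sig Gam f" | "mso_over Sig Gam (MAll1 x f) = mso_over Sig Gam f"
| "mso_over Sig Gam (MEx2 X f) = mso_over Sig Gam f" | "mso_over Sig Gam (MAll2 X f) = mso_over Sig Gam f"

definition smso_sem :: "('d, 'z) lgroup_scheme \<Rightarrow> 's set \<Rightarrow> 'g set \<Rightarrow> ('s, 'g) mso
    \<Rightarrow> ('s, 'g, 'd) dword set" where
  "smso_sem G Sig Gam phi =
     {V \<in> dwords G Sig Gam. \<forall>i<length V. sat G (take (Suc i) V) (\<lambda>_. 0) (\<lambda>_. {}) phi}"

datatype cmp = CGt | CEq | CLt
datatype upd = UOld | UNew | UAdd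

text \<open>Registers are indexed 0..k-1 (the paper uses 1..k).\<close>
record ('q, 's, 'g, 'd) srt =
  srt_Q     :: "'q set"
  srt_q0    :: 'q
  srt_k     :: nat
  srt_R0    :: "'d list"
  srt_Delta :: "('q \<times> 's \<times> cmp list \<times> upd list \<times> nat \<times> 'g \<times> 'q) set"

definition is_srt :: "('d, 'z) lgroup_scheme \<Rightarrow> 's set \<Rightarrow> 'g set
    \<Rightarrow> ('q, 's, 'g, 'd) srt \<Rightarrow> bool" where
  "is_srt G Sig Gam S \<longleftrightarrow>
     finite (srt_Q S) \<and> srt_q0 S \<in> srt_Q S
   \<and> length (srt_R0 S) = srt_k S \<and> set (srt_R0 S) \<subseteq> lg_D G
   \<and> (\<forall>(q, s, l, m, u, g, q') \<in> srt_Delta S.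
        q \<in> srt_Q S \<and> s \<in> Sig \<and> length l = srt_k S \<and> length m = srt_k S
        \<and> u < srt_k S \<and> g \<in> Gam \<and> q' \<in> srt_Q S)"

fun cmp_ok :: "('d, 'z) lgroup_scheme \<Rightarrow> cmp \<Rightarrow> 'd \<Rightarrow> 'd \<Rightarrow> bool" where
  "cmp_ok G CGt d r = lg_less G r d"
| "cmp_ok G CEq d r = (d = r)"
| "cmp_ok G CLt d r = lg_less G d r"

fun upd_val :: "('d, 'z) lgroup_scheme \<Rightarrow> upd \<Rightarrow> 'd \<Rightarrow> 'd \<Rightarrow> 'd" where
  "upd_val G UOld d r = r"
| "upd_val G UNew d r = d"
| "upd_val G UAdd d r = lg_add G r d"

definition srt_step :: "('d, 'z) lgroup_scheme \<Rightarrow> ('q, 's, 'g, 'd) srt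
    \<Rightarrow> 'q \<times> 'd list \<Rightarrow> 's \<times> 'd \<Rightarrow> 'g \<times> 'd \<Rightarrow> 'q \<times> 'd list \<Rightarrow> bool" where
  "srt_step G S c a b c' \<longleftrightarrow>
     (\<exists>l m u. (fst c, fst a, l, m, u, fst b, fst c') \<in> srt_Delta S
        \<and> length (snd c') = srt_k S
        \<and> (\<forall>i<srt_k S. cmp_ok G (l ! i) (snd a) (snd c ! i))
        \<and> (\<forall>i<srt_k S. snd c' ! i = upd_val G (m ! i) (snd a) (snd c ! i))
        \<and> snd b = snd c' ! u)"

definition srt_run :: "('d, 'z) lgroup_scheme \<Rightarrow> ('q, 's, 'g, 'd) srt
    \<Rightarrow> ('s \<times> 'd) list \<Rightarrow> ('g \<times> 'd) list \<Rightarrow> bool" where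
  "srt_run G S s t \<longleftrightarrow> length t = length s \<and>
     (\<exists>cs :: nat \<Rightarrow> 'q \<times> 'd list. cs 0 = (srt_q0 S, srt_R0 S) \<and>
        (\<forall>i<length s. srt_step G S (cs i) (s ! i) (t ! i) (cs (Suc i))))"

definition srt_sem :: "('d, 'z) lgroup_scheme \<Rightarrow> 's set \<Rightarrow> ('q, 's, 'g, 'd) srt
    \<Rightarrow> ('s, 'g, 'd) dword set" where
  "srt_sem G Sig S = {zip s t | s t. s \<in> lists (Sig \<times> lg_D G) \<and> srt_run G S s t}"

end

theory Submission
  imports Defs
begin

text \<open>The always-true first-order sentence defines the universal transformation, which relates
  every input word to every output word over the same positions. An SRT cannot realise it: the
  first output value is read from a register right after one update, so it lies in the finite
  set of values d, r, r + d for the first input value d and the initial register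
  contents r, whereas the data domain is infinite.\<close>

definition real_lgroup :: "real lgroup" where
  "real_lgroup = \<lparr>lg_D = UNIV, lg_le = (\<le>), lg_add = (+), lg_zero = 0, lg_neg = uminus\<rparr>"

lemma linear_group_real_lgroup: "linear_group real_lgroup"
  unfolding linear_group_def real_lgroup_def by (auto simp: infinite_UNIV_char_0)

definition mso_true :: "('s, 'g) mso" where
  "mso_true = MAll1 0 (MEq 0 0)"

lemma sentence_mso_true: "sentence mso_true"
  by (simp add: sentence_def mso_true_def)

lemma smso_sem_mso_true: "smso_sem G Sig Gam mso_true = dwords G Sig Gam"
  unfolding smso_sem_def mso_true_def by auto

definition srt_first_outputs :: "('d, 'z) lgroup_scheme \<Rightarrow> ('q, 's, 'g, 'd) srt \<Rightarrow> 'd \<Rightarrow> 'd set" where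
  "srt_first_outputs G S d = insert d (set (srt_R0 S) \<union> (\<lambda>r. lg_add G r d) ` set (srt_R0 S))"

lemma finite_srt_first_outputs: "finite (srt_first_outputs G S d)"
  by (simp add: srt_first_outputs_def)

lemma srt_step_output:
  assumes S: "is_srt G Sig Gam S"
    and len: "length R = srt_k S"
    and step: "srt_step G S (q, R) (s, d) (g, d') c'"
  shows "d' \<in> insert d (set R \<union> (\<lambda>r. lg_add G r d) ` set R)"
proof -
  from step obtain l m u where tr: "(q, s, l, m, u, g, fst c') \<in> srt_Delta S"
    and upd: "\<forall>i<srt_k S. snd c' ! i = upd_val G (m ! i) d (R ! i)"
    and out: "d' = snd c' ! u"
    unfolding srt_step_def by auto
  from S tr have u: "u < length R"
    using len unfolding is_srt_def by fastforce
  with upd out len have "d' = upd_val G (m ! u) d (R ! u)" by simp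
  with u show ?thesis by (cases "m ! u") auto
qed

lemma srt_sem_Cons_output:
  assumes S: "is_srt G Sig Gam S"
    and V: "((s, d), (g, d')) # W \<in> srt_sem G Sig S"
  shows "d' \<in> srt_first_outputs G S d"
proof -
  from V obtain xs ys where zip: "((s, d), (g, d')) # W = zip xs ys" and run: "srt_run G S xs ys"
    unfolding srt_sem_def by blast
  then obtain xs' ys' where "xs = (s, d) # xs'" "ys = (g, d') # ys'"
    by (cases xs; cases ys) auto
  with run obtain cs where "cs 0 = (srt_q0 S, srt_R0 S)"
    and "srt_step G S (cs 0) (s, d) (g, d') (cs (Suc 0))"
    unfolding srt_run_def by fastforce
  moreover have "length (srt_R0 S) = srt_k S"
    using S by (simp add: is_srt_def)
  ultimately show ?thesis
    using srt_step_output[OF S] unfolding srt_first_outputs_def by metis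
qed

theorem dwords_not_srt_definable:
  assumes G: "linear_group G" and S: "is_srt G Sig Gam S"
    and s: "s \<in> Sig" and g: "g \<in> Gam"
  shows "dwords G Sig Gam \<noteq> srt_sem G Sig S"
proof
  assume eq: "dwords G Sig Gam = srt_sem G Sig S"
  have D: "infinite (lg_D G)" "lg_zero G \<in> lg_D G"
    using G by (simp_all add: linear_group_def)
  obtain y where y: "y \<in> lg_D G" "y \<notin> srt_first_outputs G S (lg_zero G)"
    using infinite_imp_nonempty[OF Diff_infinite_finite[OF finite_srt_first_outputs D(1)]] by blast
  have "[((s, lg_zero G), (g, y))] \<in> dwords G Sig Gam"
    using s g D y by (simp add: dwords_def)
  then have "[((s, lg_zero G), (g, y))] \<in> srt_sem G Sig S"
    using eq by simp
  with y show False
    using srt_sem_Cons_output[OF S] by blast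
qed

theorem theorem4p3:
  shows "\<exists>(G :: real lgroup) (Sig :: nat set) (Gam :: nat set) (phi :: (nat, nat) mso).
           linear_group G \<and> finite Sig \<and> finite Gam
         \<and> mso_over Sig Gam phi \<and> sentence phi \<and> first_order phi
         \<and> (\<forall>S :: (nat, nat, nat, real) srt. is_srt G Sig Gam S \<longrightarrow>
               smso_sem G Sig Gam phi \<noteq> srt_sem G Sig S)"
proof (intro exI conjI allI impI)
  show "linear_group real_lgroup" by (rule linear_group_real_lgroup)
  show "sentence mso_true" by (rule sentence_mso_true)
  show "mso_over {0} {0} mso_true" "first_order mso_true"
    by (simp_all add: mso_true_def)
  fix S :: "(nat, nat, nat, real) srt"
  assume "is_srt real_lgroup {0} {0} S"
  then show "smso_sem real_lgroup {0} {0} mso_true \<noteq> srt_sem real_lgroup {0} S"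
    unfolding smso_sem_mso_true by (rule dwords_not_srt_definable[OF linear_group_real_lgroup]) simp_all
qed simp_all

end
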